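(* Let $L(t)=(l_{ij}(t))_{i,j=1}^m$ satisfy Assumption A4 and $\sigma>0$. Suppose there exist $\delta>0$ and $T>0$ such that for every interval $I=[t_1,t_1+T]\subset[0,\infty)$ the graph $G(I,\delta)$ has a spanning tree. Then there exist $\delta_1>0$ and $T_1>0$ such that $\eta(V(t_0+T_1,t_0))>\delta_1$ for all $t_0\ge0$.
   Context: Assumption A4: (a) $l_{ij}(t)\ge0$ for $i\neq j$ are measurable and $l_{ii}(t)=-\sum_{j\ne i}l_{ij}(t)$; (b) there is $M_1>0$ with $|l_{ij}(t)|\le M_1$ for all $i,j,t$. $V(t,t_0)$ is the solution matrix (identity at $t_0$) of $\dot u=\sigma L(t)u$, $u\in\mathbb R^m$ (it is a stochastic matrix). For a stochastic matrix $V=(v_{ij})$ with rows $v_i$, $\eta(V)=\min_{i,j}\sum_{k=1}^m\min\{v_{ik},v_{jk}\}$; $V$ is called $\delta_1$-scrambling if $\eta(V)>\delta_1$. For a compact interval $I=[t_1,t_2]$ and $\delta>0$, $G(I,\delta)$ is the directed graph on $\{1,\dots,m\}$ with an edge from $j$ to $i$ iff $\int_{t_1}^{t_2}l_{ij}(\tau)d\tau>\delta$. A directed graph has a spanning tree if some vertex reaches every other vertex along directed edges. *)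

theory Defs
  imports "HOL-Analysis.Analysis"
begin

definition eta :: "real^'n::finite^'n \<Rightarrow> real" where
  "eta V = Min {(\<Sum>k\<in>UNIV. min (V $ i $ k) (V $ j $ k)) | i j. True}"

text \<open>Edge set of G([t1,t2],delta): an edge from j to i iff the integral of l_ij over
  [t1,t2] exceeds delta. Pairs are (source, target).\<close>
definition graph_edges :: "(real \<Rightarrow> real^'n::finite^'n) \<Rightarrow> real \<Rightarrow> real \<Rightarrow> real \<Rightarrow> ('n \<times> 'n) set" where
  "graph_edges L t1 t2 \<delta> = {(j, i). integral {t1..t2} (\<lambda>\<tau>. L \<tau> $ i $ j) > \<delta>}"

text \<open>A directed graph (edge set E on vertex type 'n) has a spanning tree iff some vertex
  reaches every vertex along directed edges.\<close>
definition has_spanning_tree :: "('n \<times> 'n) set \<Rightarrow> bool" where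
  "has_spanning_tree E \<longleftrightarrow> (\<exists>r. \<forall>v. (r, v) \<in> E\<^sup>*)"

end

theory Submission
  imports Defs
begin

(*
  Every column of V(., t0) solves u' = sigma L u with a nonnegative initial value.  Since L is
  Metzler, such solutions stay nonnegative (Gronwall applied to the total negative part) and
  decay at most like exp (-sigma M1 t).  Over a window of length T, positivity of u_j passes
  to u_i along every edge j -> i of the window graph, losing at most a fixed factor gamma.
  Composing n^2 consecutive windows, each of whose graphs has a spanning tree, gives a common
  root rho that reaches every vertex: the ancestor sets of the vertices keep growing as long as
  rho is missing from one of them.  So the column rho of V(t0 + n^2 T, t0) is bounded below
  by gamma^(n^2), and this bounds the scrambling coefficient from below.
*)

lemma integrable_on_bounded_measurable:
  fixes f :: "real \<Rightarrow> real"
  assumes "f \<in> borel_measurable lborel" "\<And>t. \<bar>f t\<bar> \<le> M"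
  shows "f integrable_on {a..b}"
proof (rule measurable_bounded_by_integrable_imp_integrable[where g="\<lambda>_. M"])
  have "f \<in> borel_measurable lebesgue"
    by (rule measurable_completion[OF assms(1)])
  then show "f \<in> borel_measurable (lebesgue_on {a..b})"
    by (simp add: measurable_restrict_space1)
qed (use assms in auto)

lemma last_zero_before_negative:
  fixes f :: "real \<Rightarrow> real"
  assumes cont: "continuous_on {a..r} f" and "0 \<le> f a" "f r < 0" "a \<le> r"
  obtains s where "s \<in> {a..r}" "f s = 0" "\<And>q. q \<in> {s..r} \<Longrightarrow> f q \<le> 0"
proof -
  define Z where "Z = {a..r} \<inter> f -` {0..}"
  have "compact Z"
    unfolding Z_def compact_eq_bounded_closed
    by (auto intro: continuous_closed_preimage[OF cont] bounded_subset[of "{a..r}"])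
  moreover have "a \<in> Z" unfolding Z_def using assms by auto
  ultimately obtain s where s: "s \<in> Z" and s_max: "\<And>z. z \<in> Z \<Longrightarrow> z \<le> s"
    using compact_attains_sup[of Z] by blast
  have s_bounds: "a \<le> s" "s \<le> r" "0 \<le> f s" using s unfolding Z_def by auto
  have nonpos: "f q \<le> 0" if "q \<in> {s..r}" "q \<noteq> s" for q
    using s_max[of q] that s_bounds unfolding Z_def by force
  obtain z where z: "s \<le> z" "z \<le> r" "f z = 0"
    using IVT2'[of f r 0 s] assms s_bounds continuous_on_subset[OF cont] by force
  moreover have "z \<in> Z" unfolding Z_def using z s_bounds by auto
  ultimately have "f s = 0" using s_max by force
  with nonpos s_bounds show thesis by (intro that) force+
qed

lemma gronwall_zero:
  fixes n :: "real \<Rightarrow> real"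
  assumes cont: "continuous_on {a..b} n" and nn: "\<And>t. t \<in> {a..b} \<Longrightarrow> 0 \<le> n t"
    and le: "\<And>t. t \<in> {a..b} \<Longrightarrow> n t \<le> K * integral {a..t} n"
    and t: "t \<in> {a..b}"
  shows "n t = 0"
proof -
  define N where "N = (\<lambda>t. integral {a..t} n)"
  define g where "g = (\<lambda>t. exp (- K * t) * N t)"
  have N_cont: "continuous_on {a..b} N"
    unfolding N_def by (rule indefinite_integral_continuous_1[OF integrable_continuous_interval[OF cont]])
  have N_deriv: "(N has_real_derivative n x) (at x)" if "a < x" "x < b" for x
    using integral_has_real_derivative[OF cont, of x] that at_within_Icc_at[OF that]
    unfolding N_def by auto
  have N_nonneg: "0 \<le> N x" if "x \<in> {a..b}" for x
    unfolding N_def using that nn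
    by (intro integral_nonneg integrable_continuous_interval continuous_on_subset[OF cont]) auto
  have "g t \<le> g a"
  proof (rule DERIV_nonpos_imp_decreasing_open[of a t g])
    show "a \<le> t" using t by auto
    show "continuous_on {a..t} g"
      unfolding g_def using t by (intro continuous_intros continuous_on_subset[OF N_cont]) auto
    fix x assume x: "a < x" "x < t"
    have "(g has_real_derivative exp (- K * x) * (n x - K * N x)) (at x)"
      unfolding g_def using N_deriv[of x] x t
      by (auto intro!: derivative_eq_intros simp: algebra_simps)
    moreover have "n x \<le> K * N x" using le[of x] x t unfolding N_def by auto
    ultimately show "\<exists>y. (g has_real_derivative y) (at x) \<and> y \<le> 0"
      by (intro exI[of _ "exp (- K * x) * (n x - K * N x)"]) (simp add: mult_nonneg_nonpos)
  qed
  then have "N t \<le> 0" by (simp add: g_def N_def mult_le_0_iff)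
  with N_nonneg[OF t] le[OF t] nn[OF t] show ?thesis unfolding N_def by simp
qed

lemma gronwall_exp_lower_bound:
  fixes y :: "real \<Rightarrow> real"
  assumes cont: "continuous_on {a..b} y" and k: "0 \<le> k" and ab: "a \<le> b"
    and le: "\<And>t. t \<in> {a..b} \<Longrightarrow> - k * integral {t..b} y \<le> y b - y t"
  shows "exp (- k * (b - a)) * y a \<le> y b"
proof -
  define Y where "Y = (\<lambda>t. integral {t..b} y)"
  define g where "g = (\<lambda>t. exp (k * t) * (k * Y t + y b))"
  have Y_cont: "continuous_on {a..b} Y"
    unfolding Y_def by (rule indefinite_integral_continuous_1'[OF integrable_continuous_interval[OF cont]])
  have Y_deriv: "(Y has_real_derivative - y x) (at x)" if "a < x" "x < b" for x
    using integral_has_real_derivative'[OF cont, of x] that at_within_Icc_at[OF that]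
    unfolding Y_def by auto
  have "g a \<le> g b"
  proof (rule DERIV_nonneg_imp_increasing_open[OF ab])
    show "continuous_on {a..b} g" unfolding g_def by (intro continuous_intros Y_cont)
    fix x assume x: "a < x" "x < b"
    have "(g has_real_derivative k * exp (k * x) * (k * Y x - y x + y b)) (at x)"
      unfolding g_def using Y_deriv[of x] x
      by (auto intro!: derivative_eq_intros simp: algebra_simps)
    moreover have "0 \<le> k * Y x - y x + y b" using le[of x] x unfolding Y_def by auto
    ultimately show "\<exists>z. (g has_real_derivative z) (at x) \<and> 0 \<le> z"
      using k by (intro exI[of _ "k * exp (k * x) * (k * Y x - y x + y b)"]) simp
  qed
  moreover have "y a \<le> k * Y a + y b" using le[of a] ab unfolding Y_def by auto
  then have "exp (k * a) * y a \<le> g a" unfolding g_def by (simp add: mult_left_mono)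
  moreover have "g b = exp (k * b) * y b" unfolding g_def Y_def by simp
  ultimately have "exp (k * a) * y a \<le> exp (k * b) * y b" by linarith
  then have "exp (- k * b) * (exp (k * a) * y a) \<le> exp (- k * b) * (exp (k * b) * y b)"
    by (simp add: mult_left_mono)
  then show ?thesis by (simp add: algebra_simps flip: exp_add)
qed

text \<open>\<open>relcomp_seq R n\<close> relates \<open>x\<close> to \<open>y\<close> along a path that takes one step of
  \<open>R (n - 1)\<close>, then one of \<open>R (n - 2)\<close>, \<dots>, and finally one of \<open>R 0\<close>.\<close>
fun relcomp_seq :: "(nat \<Rightarrow> 'a rel) \<Rightarrow> nat \<Rightarrow> 'a rel" where
  "relcomp_seq R 0 = Id"
| "relcomp_seq R (Suc n) = R n O relcomp_seq R n"

lemma rtrancl_enters_set: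
  assumes "(r, z) \<in> E\<^sup>*" "r \<notin> A" "z \<in> A"
  shows "\<exists>x y. (x, y) \<in> E \<and> x \<notin> A \<and> y \<in> A"
  using assms by (induction rule: rtrancl_induct) auto

lemma ancestors_grow_under_rooted:
  assumes root: "\<forall>v. (r, v) \<in> E\<^sup>*" and "(r, y) \<notin> R" "(y, y) \<in> R"
  shows "{x. (x, y) \<in> R} \<subset> {x. (x, y) \<in> (E \<union> Id) O R}"
proof -
  obtain x z where "(x, z) \<in> E" "(x, y) \<notin> R" "(z, y) \<in> R"
    using rtrancl_enters_set[of r y E "{x. (x, y) \<in> R}"] root assms(2,3) by auto
  then show ?thesis by auto
qed

lemma relcomp_seq_common_root:
  fixes E :: "nat \<Rightarrow> 'a::finite rel"
  assumes rooted: "\<And>j. j < CARD('a) * CARD('a) \<Longrightarrow> \<exists>r. \<forall>v. (r, v) \<in> (E j)\<^sup>*"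
  shows "\<exists>r. \<forall>v. (r, v) \<in> relcomp_seq (\<lambda>j. E j \<union> Id) (CARD('a) * CARD('a))"
proof (rule ccontr)
  define N where "N = CARD('a) * CARD('a)"
  define anc where "anc j y = {x. (x, y) \<in> relcomp_seq (\<lambda>j. E j \<union> Id) j}" for j y
  assume "\<not> ?thesis"
  then have no_root: "\<exists>y. r \<notin> anc N y" for r by (auto simp: anc_def N_def)
  have anc_Suc: "anc j y \<subseteq> anc (Suc j) y" for j y unfolding anc_def by auto
  have anc_mono: "anc j y \<subseteq> anc k y" if "j \<le> k" for j k y
    using lift_Suc_mono_le[of "\<lambda>j. anc j y", OF anc_Suc that] .
  have anc_self: "y \<in> anc j y" for j y by (induction j) (auto simp: anc_def)
  text \<open>Each rooted graph strictly enlarges some ancestor set, so the total size of the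
    ancestor sets, which starts at \<open>CARD('a)\<close>, would exceed its maximum \<open>CARD('a)\<^sup>2\<close>.\<close>
  define \<Phi> where "\<Phi> j = (\<Sum>y\<in>UNIV. card (anc j y))" for j
  have \<Phi>_lower: "CARD('a) + j \<le> \<Phi> j" if "j \<le> N" for j
    using that
  proof (induction j)
    case 0
    have "anc 0 y = {y}" for y unfolding anc_def by auto
    then show ?case unfolding \<Phi>_def by simp
  next
    case (Suc j)
    obtain r where r: "\<forall>v. (r, v) \<in> (E j)\<^sup>*" using rooted Suc.prems unfolding N_def by force
    obtain y where "r \<notin> anc N y" using no_root by blast
    then have "r \<notin> anc j y" using anc_mono[of j N y] Suc.prems by auto
    then have "anc j y \<subset> anc (Suc j) y"
      using ancestors_grow_under_rooted[OF r] anc_self unfolding anc_def by simp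
    then have "card (anc j y) < card (anc (Suc j) y)" by (simp add: psubset_card_mono)
    moreover have "card (anc j x) \<le> card (anc (Suc j) x)" for x
      using anc_Suc by (simp add: card_mono)
    ultimately have "\<Phi> j < \<Phi> (Suc j)" unfolding \<Phi>_def by (intro sum_strict_mono_ex1) auto
    with Suc show ?case by simp
  qed
  have "\<Phi> N \<le> (\<Sum>y\<in>(UNIV::'a set). CARD('a))"
    unfolding \<Phi>_def by (intro sum_mono) (simp add: card_mono)
  then have "\<Phi> N \<le> N" unfolding N_def by simp
  moreover have "0 < CARD('a)" by simp
  ultimately show False using \<Phi>_lower[of N] by linarith
qed

lemma eta_ge_column_lower_bound:
  fixes V :: "real^'n::finite^'n"
  assumes nonneg: "\<And>i k. 0 \<le> V $ i $ k" and column: "\<And>i. c \<le> V $ i $ r"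
  shows "c \<le> eta V"
  unfolding eta_def
proof (rule Min.boundedI)
  have "{\<Sum>k\<in>UNIV. min (V $ i $ k) (V $ j $ k) |i j. True}
        = (\<lambda>(i, j). \<Sum>k\<in>UNIV. min (V $ i $ k) (V $ j $ k)) ` UNIV" by auto
  then show "finite {\<Sum>k\<in>UNIV. min (V $ i $ k) (V $ j $ k) |i j. True}" by simp
  show "{\<Sum>k\<in>UNIV. min (V $ i $ k) (V $ j $ k) |i j. True} \<noteq> {}" by auto
next
  fix s assume "s \<in> {\<Sum>k\<in>UNIV. min (V $ i $ k) (V $ j $ k) |i j. True}"
  then obtain i j where s: "s = (\<Sum>k\<in>UNIV. min (V $ i $ k) (V $ j $ k))" by auto
  have "min (V $ i $ r) (V $ j $ r) \<le> s"
    unfolding s by (rule member_le_sum) (auto simp: nonneg)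
  with column[of i] column[of j] show "c \<le> s" by linarith
qed

locale metzler_bound =
  fixes L :: "real \<Rightarrow> real^'n::finite^'n" and \<sigma> M1 :: real
  assumes offdiag_nonneg: "\<And>t i j. i \<noteq> j \<Longrightarrow> 0 \<le> L t $ i $ j"
    and diag_nonpos: "\<And>t i. L t $ i $ i \<le> 0"
    and bounded: "\<And>t i j. \<bar>L t $ i $ j\<bar> \<le> M1"
    and sigma_pos: "0 < \<sigma>"
begin

lemma M1_nonneg: "0 \<le> M1"
  using bounded[of undefined undefined undefined] by linarith

lemma sigma_M1_nonneg: "0 \<le> \<sigma> * M1"
  using sigma_pos M1_nonneg by simp

definition decay_factor :: "real \<Rightarrow> real" where
  "decay_factor T = exp (- (\<sigma> * M1) * T)"

text \<open>The first argument of \<open>min\<close> is the factor a vertex retains over a window of length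
  \<open>T\<close>, the second the factor passed along an edge of weight \<open>\<delta>\<close>.\<close>
definition transfer_factor :: "real \<Rightarrow> real \<Rightarrow> real" where
  "transfer_factor \<delta> T =
     min (decay_factor T) (\<sigma> * \<delta> * decay_factor T ^ 2 / (decay_factor T + \<sigma> * M1 * T))"

lemma decay_factor_pos: "0 < decay_factor T"
  by (simp add: decay_factor_def)

lemma decay_factor_antimono: "s \<le> T \<Longrightarrow> decay_factor T \<le> decay_factor s"
  unfolding decay_factor_def using sigma_M1_nonneg by (simp add: mult_left_mono)

lemma transfer_factor_pos:
  assumes "0 < \<delta>" "0 \<le> T"
  shows "0 < transfer_factor \<delta> T"
  using assms sigma_pos sigma_M1_nonneg decay_factor_pos[of T]
  by (simp add: transfer_factor_def add_pos_nonneg)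

lemma drift_ge_diag:
  assumes "\<And>k. 0 \<le> w k"
  shows "- M1 * w i \<le> (\<Sum>k\<in>UNIV. L t $ i $ k * w k)"
proof -
  have "- M1 * w i \<le> L t $ i $ i * w i"
    using bounded[of t i i] assms by (intro mult_right_mono) auto
  also have "\<dots> \<le> (\<Sum>k\<in>UNIV. L t $ i $ k * w k)"
    by (rule member_le_sum) (auto intro: mult_nonneg_nonneg offdiag_nonneg assms)
  finally show ?thesis .
qed

lemma drift_ge_edge:
  assumes "\<And>k. 0 \<le> w k" and "i \<noteq> j"
  shows "- M1 * w i + L t $ i $ j * w j \<le> (\<Sum>k\<in>UNIV. L t $ i $ k * w k)"
proof -
  have "- M1 * w i \<le> L t $ i $ i * w i"
    using bounded[of t i i] assms by (intro mult_right_mono) auto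
  then have "- M1 * w i + L t $ i $ j * w j \<le> L t $ i $ i * w i + L t $ i $ j * w j"
    by simp
  also have "\<dots> = (\<Sum>k\<in>{i, j}. L t $ i $ k * w k)"
    using assms(2) by simp
  also have "\<dots> \<le> (\<Sum>k\<in>UNIV. L t $ i $ k * w k)"
    by (rule sum_mono2) (auto intro: mult_nonneg_nonneg offdiag_nonneg assms)
  finally show ?thesis .
qed

lemma neg_drift_le:
  assumes "w i \<le> 0"
  shows "- (\<Sum>k\<in>UNIV. L t $ i $ k * w k) \<le> M1 * (\<Sum>k\<in>UNIV. max 0 (- w k))"
proof -
  have "L t $ i $ k * (- w k) \<le> M1 * max 0 (- w k)" for k
  proof (cases "k = i")
    case True
    then have "L t $ i $ k * (- w k) \<le> 0"
      using diag_nonpos[of t i] assms by (simp add: mult_nonpos_nonpos)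
    then show ?thesis using M1_nonneg by (meson max.cobounded1 mult_nonneg_nonneg order_trans)
  next
    case False
    then have "L t $ i $ k * (- w k) \<le> L t $ i $ k * max 0 (- w k)"
      by (intro mult_left_mono offdiag_nonneg) auto
    also have "\<dots> \<le> M1 * max 0 (- w k)"
      using bounded[of t i k] by (intro mult_right_mono) auto
    finally show ?thesis .
  qed
  then have "(\<Sum>k\<in>UNIV. L t $ i $ k * (- w k)) \<le> (\<Sum>k\<in>UNIV. M1 * max 0 (- w k))"
    by (rule sum_mono)
  then show ?thesis by (simp add: sum_negf sum_distrib_left)
qed

end

locale metzler_solution = metzler_bound +
  fixes t0 :: real and u :: "'n::finite \<Rightarrow> real \<Rightarrow> real"
  assumes solves: "\<And>i a b. t0 \<le> a \<Longrightarrow> a \<le> b \<Longrightarrow>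
      ((\<lambda>r. \<sigma> * (\<Sum>j\<in>UNIV. L r $ i $ j * u j r)) has_integral (u i b - u i a)) {a..b}"
    and init_nonneg: "\<And>i. 0 \<le> u i t0"
begin

lemma continuous_on_solution:
  assumes "t0 \<le> a"
  shows "continuous_on {a..b} (u i)"
proof (cases "a \<le> b")
  case True
  define f where "f r = \<sigma> * (\<Sum>j\<in>UNIV. L r $ i $ j * u j r)" for r
  have "f integrable_on {a..b}" using solves[OF assms True] unfolding f_def by blast
  then have "continuous_on {a..b} (\<lambda>t. u i a + integral {a..t} f)"
    by (intro continuous_intros indefinite_integral_continuous_1)
  moreover have "u i a + integral {a..t} f = u i t" if "t \<in> {a..b}" for t
    using integral_unique[OF solves[of a t i]] assms that unfolding f_def by auto
  ultimately show ?thesis by (rule continuous_on_eq)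
qed simp

definition neg_mass :: "real \<Rightarrow> real" where
  "neg_mass r = (\<Sum>i\<in>UNIV. max 0 (- u i r))"

lemma neg_mass_nonneg: "0 \<le> neg_mass r"
  unfolding neg_mass_def by (simp add: sum_nonneg)

lemma continuous_on_neg_mass: "t0 \<le> a \<Longrightarrow> continuous_on {a..b} neg_mass"
  unfolding neg_mass_def by (intro continuous_intros continuous_on_solution)

lemma neg_mass_integrable: "t0 \<le> a \<Longrightarrow> neg_mass integrable_on {a..b}"
  by (rule integrable_continuous_interval[OF continuous_on_neg_mass])

lemma neg_part_le_integral_neg_mass:
  assumes "t0 \<le> r"
  shows "max 0 (- u i r) \<le> \<sigma> * M1 * integral {t0..r} neg_mass"
proof (cases "u i r < 0")
  case False
  have "0 \<le> integral {t0..r} neg_mass"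
    by (intro integral_nonneg neg_mass_integrable neg_mass_nonneg) simp
  with False show ?thesis using sigma_M1_nonneg by simp
next
  case True
  text \<open>Integrate from the last time \<open>s\<close> at which \<open>u i\<close> vanishes, so that only the
    negative parts of the other components can push \<open>u i\<close> down.\<close>
  obtain s where s: "s \<in> {t0..r}" "u i s = 0" and nonpos: "\<And>q. q \<in> {s..r} \<Longrightarrow> u i q \<le> 0"
    using last_zero_before_negative[OF continuous_on_solution[OF order_refl] init_nonneg True assms]
    by blast
  have "- (u i r - u i s) \<le> \<sigma> * M1 * integral {s..r} neg_mass"
  proof (rule has_integral_le[OF has_integral_neg[OF solves]
        has_integral_mult_right[OF integrable_integral[OF neg_mass_integrable]]])
    fix q assume "q \<in> {s..r}"
    then have "- (\<Sum>j\<in>UNIV. L q $ i $ j * u j q) \<le> M1 * neg_mass q"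
      unfolding neg_mass_def using neg_drift_le[of "\<lambda>j. u j q"] nonpos by blast
    then show "- (\<sigma> * (\<Sum>j\<in>UNIV. L q $ i $ j * u j q)) \<le> \<sigma> * M1 * neg_mass q"
      using sigma_pos mult_left_mono[of _ _ \<sigma>] by fastforce
  qed (use s in auto)
  also have "\<dots> \<le> \<sigma> * M1 * integral {t0..r} neg_mass"
  proof (rule mult_left_mono[OF _ sigma_M1_nonneg])
    have "integral {t0..s} neg_mass + integral {s..r} neg_mass = integral {t0..r} neg_mass"
      using s by (intro Henstock_Kurzweil_Integration.integral_combine neg_mass_integrable) auto
    moreover have "0 \<le> integral {t0..s} neg_mass"
      by (intro integral_nonneg neg_mass_integrable neg_mass_nonneg) simp
    ultimately show "integral {s..r} neg_mass \<le> integral {t0..r} neg_mass" by linarith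
  qed
  finally show ?thesis using True s by simp
qed

lemma solution_nonneg:
  assumes "t0 \<le> t"
  shows "0 \<le> u i t"
proof -
  have le: "neg_mass r \<le> (CARD('n) * (\<sigma> * M1)) * integral {t0..r} neg_mass"
    if "r \<in> {t0..t}" for r
  proof -
    have "neg_mass r \<le> (\<Sum>i\<in>(UNIV::'n set). \<sigma> * M1 * integral {t0..r} neg_mass)"
      unfolding neg_mass_def[of r] using that
      by (intro sum_mono neg_part_le_integral_neg_mass) auto
    then show ?thesis by (simp add: mult.assoc)
  qed
  have "neg_mass t = 0"
    by (rule gronwall_zero[OF continuous_on_neg_mass[OF order_refl] neg_mass_nonneg le])
      (use assms in auto)
  then have "max 0 (- u i t) = 0"
    unfolding neg_mass_def by (subst (asm) sum_nonneg_eq_0_iff) auto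
  then show ?thesis by linarith
qed

lemma solution_exp_decay:
  assumes "t0 \<le> a" "a \<le> b"
  shows "exp (- (\<sigma> * M1) * (b - a)) * u i a \<le> u i b"
proof (rule gronwall_exp_lower_bound[OF continuous_on_solution[OF assms(1)] sigma_M1_nonneg assms(2)])
  fix t assume t: "t \<in> {a..b}"
  show "- (\<sigma> * M1) * integral {t..b} (u i) \<le> u i b - u i t"
  proof (rule has_integral_le[OF has_integral_mult_right[OF integrable_integral] solves])
    show "u i integrable_on {t..b}"
      using assms t by (intro integrable_continuous_interval continuous_on_solution) auto
    fix q assume "q \<in> {t..b}"
    then have "\<And>k. 0 \<le> u k q" using assms t by (intro solution_nonneg) auto
    then have "- M1 * u i q \<le> (\<Sum>j\<in>UNIV. L q $ i $ j * u j q)" by (rule drift_ge_diag)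
    then show "- (\<sigma> * M1) * u i q \<le> \<sigma> * (\<Sum>j\<in>UNIV. L q $ i $ j * u j q)"
      using sigma_pos mult_left_mono[of _ _ \<sigma>] by (fastforce simp: algebra_simps)
  qed (use assms t in auto)
qed

lemma solution_decay_within:
  assumes "t0 \<le> a" "a \<le> r" "r \<le> a + T"
  shows "decay_factor T * u i a \<le> u i r"
proof -
  have "decay_factor T \<le> exp (- (\<sigma> * M1) * (r - a))"
    using decay_factor_antimono[of "r - a" T] assms unfolding decay_factor_def by simp
  then have "decay_factor T * u i a \<le> exp (- (\<sigma> * M1) * (r - a)) * u i a"
    using solution_nonneg[OF assms(1)] by (rule mult_right_mono)
  also have "\<dots> \<le> u i r" using solution_exp_decay assms by blast
  finally show ?thesis .
qed

lemma edge_increment: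
  assumes a: "t0 \<le> a" and ab: "a \<le> b" and ij: "i \<noteq> j"
    and lint: "(\<lambda>r. L r $ i $ j) integrable_on {a..b}"
    and low: "\<And>r. r \<in> {a..b} \<Longrightarrow> c \<le> u j r" and "0 \<le> c"
    and high: "\<And>r. r \<in> {a..b} \<Longrightarrow> u i r \<le> M"
  shows "\<sigma> * (c * integral {a..b} (\<lambda>r. L r $ i $ j) - (b - a) * (M1 * M)) \<le> u i b - u i a"
proof (rule has_integral_le[OF _ solves[OF a ab]])
  have "((\<lambda>r. M1 * M) has_integral (b - a) * (M1 * M)) {a..b}"
    using has_integral_const_real[of "M1 * M" a b] ab by simp
  then show "((\<lambda>r. \<sigma> * (c * L r $ i $ j - M1 * M)) has_integral
      \<sigma> * (c * integral {a..b} (\<lambda>r. L r $ i $ j) - (b - a) * (M1 * M))) {a..b}"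
    by (intro has_integral_mult_right has_integral_diff has_integral_mult_right
        integrable_integral lint)
  fix r assume r: "r \<in> {a..b}"
  have "- M1 * M \<le> - M1 * u i r"
    using high[OF r] M1_nonneg by (simp add: mult_left_mono)
  moreover have "L r $ i $ j * c \<le> L r $ i $ j * u j r"
    using low[OF r] offdiag_nonneg[OF ij] by (rule mult_left_mono)
  moreover have "- M1 * u i r + L r $ i $ j * u j r \<le> (\<Sum>k\<in>UNIV. L r $ i $ k * u k r)"
    using a r by (intro drift_ge_edge[OF _ ij] solution_nonneg) auto
  ultimately have "c * L r $ i $ j - M1 * M \<le> (\<Sum>k\<in>UNIV. L r $ i $ k * u k r)"
    by (simp add: algebra_simps)
  then show "\<sigma> * (c * L r $ i $ j - M1 * M) \<le> \<sigma> * (\<Sum>k\<in>UNIV. L r $ i $ k * u k r)"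
    using sigma_pos by (simp add: mult_left_mono)
qed

text \<open>On the window the increment of \<open>u i\<close> is at least \<open>\<sigma> E c \<delta> - Q u i p\<close>, with \<open>p\<close> a
  maximum point of \<open>u i\<close> there, while decay gives \<open>E u i p \<le> u i (a + T)\<close>; eliminating
  \<open>u i p\<close> yields the bound.\<close>
lemma edge_transfer:
  assumes a: "t0 \<le> a" and "0 < T" and ij: "i \<noteq> j"
    and lint: "(\<lambda>r. L r $ i $ j) integrable_on {a..a + T}"
    and big: "\<delta> < integral {a..a + T} (\<lambda>r. L r $ i $ j)"
    and c: "0 \<le> c" "c \<le> u j a"
  shows "\<sigma> * \<delta> * decay_factor T ^ 2 * c / (decay_factor T + \<sigma> * M1 * T) \<le> u i (a + T)"
proof -
  define E Q b where "E = decay_factor T" and "Q = \<sigma> * M1 * T" and "b = a + T"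
  have E: "0 < E" unfolding E_def by (rule decay_factor_pos)
  have Q: "0 \<le> Q" unfolding Q_def using sigma_M1_nonneg \<open>0 < T\<close> by simp
  have ab: "a \<le> b" using \<open>0 < T\<close> unfolding b_def by simp
  have low: "E * c \<le> u j r" if "r \<in> {a..b}" for r
    using solution_decay_within[OF a, of r T j] that c E unfolding E_def b_def
    by (meson atLeastAtMost_iff mult_left_mono less_imp_le order_trans)
  obtain p where p: "p \<in> {a..b}" and p_max: "\<And>r. r \<in> {a..b} \<Longrightarrow> u i r \<le> u i p"
    using continuous_attains_sup[of "{a..b}" "u i"] continuous_on_solution[OF a] ab by auto
  have "\<sigma> * (E * c * integral {a..b} (\<lambda>r. L r $ i $ j) - T * (M1 * u i p)) \<le> u i b - u i a"
    using edge_increment[OF a ab ij _ low _ p_max] lint c E unfolding b_def by simp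
  moreover have "\<sigma> * (E * c) * \<delta> \<le> \<sigma> * (E * c) * integral {a..b} (\<lambda>r. L r $ i $ j)"
    using big sigma_pos E c unfolding b_def by (intro mult_left_mono) auto
  moreover have "0 \<le> u i a" using a by (rule solution_nonneg)
  ultimately have increment: "\<sigma> * (E * c) * \<delta> \<le> u i b + Q * u i p"
    unfolding Q_def by (simp add: algebra_simps)
  have decay: "E * u i p \<le> u i b"
    using solution_decay_within[of p b T i] a p unfolding E_def b_def by auto
  have "E * (\<sigma> * (E * c) * \<delta>) \<le> E * (u i b + Q * u i p)"
    using increment E by (simp add: mult_left_mono)
  also have "\<dots> \<le> (E + Q) * u i b"
    using mult_left_mono[OF decay Q] by (simp add: algebra_simps)
  finally show ?thesis
    using E Q unfolding E_def[symmetric] Q_def[symmetric] b_def[symmetric]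
    by (simp add: pos_divide_le_eq power2_eq_square algebra_simps)
qed

lemma window_step:
  assumes a: "t0 \<le> a" and "0 < T"
    and lint: "\<And>i j. (\<lambda>r. L r $ i $ j) integrable_on {a..a + T}"
    and xy: "(x, y) \<in> graph_edges L a (a + T) \<delta> \<union> Id" and c: "0 \<le> c" "c \<le> u x a"
  shows "transfer_factor \<delta> T * c \<le> u y (a + T)"
proof (cases "x = y")
  case True
  have "transfer_factor \<delta> T * c \<le> decay_factor T * u x a"
    using c decay_factor_pos[of T] unfolding transfer_factor_def
    by (intro mult_mono) auto
  also have "\<dots> \<le> u y (a + T)"
    using solution_decay_within[OF a] \<open>0 < T\<close> True by simp
  finally show ?thesis .
next
  case False
  then have "\<delta> < integral {a..a + T} (\<lambda>r. L r $ y $ x)"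
    using xy unfolding graph_edges_def by auto
  from edge_transfer[OF a \<open>0 < T\<close> _ lint this c] False
  have "\<sigma> * \<delta> * decay_factor T ^ 2 / (decay_factor T + \<sigma> * M1 * T) * c \<le> u y (a + T)"
    by simp
  then show ?thesis
    using c unfolding transfer_factor_def by (meson min.cobounded2 mult_right_mono order_trans)
qed

lemma path_lower_bound:
  assumes "t0 \<le> e - real n * T" "0 < T" "0 < \<delta>"
    and lint: "\<And>i j a b. (\<lambda>r. L r $ i $ j) integrable_on {a..b}"
    and "(x, y) \<in> relcomp_seq
        (\<lambda>j. graph_edges L (e - real (Suc j) * T) (e - real (Suc j) * T + T) \<delta> \<union> Id) n"
    and "0 \<le> c" "c \<le> u x (e - real n * T)"
  shows "transfer_factor \<delta> T ^ n * c \<le> u y e"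
  using assms(1,5-)
proof (induction n arbitrary: x c)
  case (Suc n)
  then obtain z
    where xz: "(x, z) \<in> graph_edges L (e - real (Suc n) * T) (e - real (Suc n) * T + T) \<delta> \<union> Id"
      and zy: "(z, y) \<in> relcomp_seq
        (\<lambda>j. graph_edges L (e - real (Suc j) * T) (e - real (Suc j) * T + T) \<delta> \<union> Id) n"
    by auto
  have "transfer_factor \<delta> T * c \<le> u z (e - real (Suc n) * T + T)"
    using window_step[OF Suc.prems(1) \<open>0 < T\<close> lint xz Suc.prems(3,4)] .
  moreover have "0 \<le> transfer_factor \<delta> T * c"
    using transfer_factor_pos[of \<delta> T] Suc.prems(3) \<open>0 < \<delta>\<close> \<open>0 < T\<close> by simp
  ultimately have "transfer_factor \<delta> T ^ n * (transfer_factor \<delta> T * c) \<le> u y e"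
    using Suc.prems(1) \<open>0 < T\<close> by (intro Suc.IH[OF _ zy]) (auto simp: algebra_simps)
  then show ?case by (simp add: algebra_simps)
qed simp

end

locale metzler_flow = metzler_bound +
  fixes V :: "real \<Rightarrow> real \<Rightarrow> real^'n^'n"
  assumes flow_integral: "\<And>t0 t. 0 \<le> t0 \<Longrightarrow> t0 \<le> t \<Longrightarrow>
      ((\<lambda>s. \<sigma> *\<^sub>R (L s ** V s t0)) has_integral (V t t0 - mat 1)) {t0..t}"
begin

lemma entry_has_integral:
  assumes "0 \<le> t0" "t0 \<le> t"
  shows "((\<lambda>s. \<sigma> * (\<Sum>j\<in>UNIV. L s $ i $ j * V s t0 $ j $ k)) has_integral
           (V t t0 $ i $ k - (if i = k then 1 else 0))) {t0..t}"
proof -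
  have "bounded_linear (\<lambda>x::real^'n^'n. x $ i $ k)"
    using bounded_linear_compose[OF bounded_linear_vec_nth[of k] bounded_linear_vec_nth[of i]]
    by (simp add: o_def)
  from has_integral_linear[OF flow_integral[OF assms] this] show ?thesis
    by (simp add: o_def matrix_matrix_mult_def mat_def)
qed

lemma flow_start:
  assumes "0 \<le> t0"
  shows "V t0 t0 $ i $ k = (if i = k then 1 else 0)"
proof -
  have "((\<lambda>s. \<sigma> * (\<Sum>j\<in>UNIV. L s $ i $ j * V s t0 $ j $ k)) has_integral
           (V t0 t0 $ i $ k - (if i = k then 1 else 0))) {t0}"
    using entry_has_integral[OF assms order_refl] by simp
  from has_integral_unique[OF this has_integral_refl(2)] show ?thesis by simp
qed

lemma column_solution:
  assumes t0: "0 \<le> t0"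
  shows "metzler_solution L \<sigma> M1 t0 (\<lambda>i t. V t t0 $ i $ k)"
proof (intro metzler_solution.intro metzler_solution_axioms.intro metzler_bound_axioms)
  fix i a b assume ab: "t0 \<le> a" "a \<le> b"
  define f where "f s = \<sigma> * (\<Sum>j\<in>UNIV. L s $ i $ j * V s t0 $ j $ k)" for s
  have a: "(f has_integral (V a t0 $ i $ k - (if i = k then 1 else 0))) {t0..a}"
    and b: "(f has_integral (V b t0 $ i $ k - (if i = k then 1 else 0))) {t0..b}"
    using entry_has_integral[OF t0] ab unfolding f_def by auto
  have "f integrable_on {a..b}"
    by (rule integrable_subinterval_real[OF has_integral_integrable[OF b]]) (use ab in auto)
  then obtain J where J: "(f has_integral J) {a..b}" by blast
  moreover have "J = V b t0 $ i $ k - V a t0 $ i $ k"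
    using has_integral_unique[OF has_integral_combine[OF ab a J] b] by simp
  ultimately show "(f has_integral (V b t0 $ i $ k - V a t0 $ i $ k)) {a..b}" by simp
qed (simp add: flow_start[OF t0])

lemma flow_nonneg:
  assumes "0 \<le> t0" "t0 \<le> t"
  shows "0 \<le> V t t0 $ i $ k"
proof -
  interpret metzler_solution L \<sigma> M1 t0 "\<lambda>i t. V t t0 $ i $ k"
    by (rule column_solution[OF assms(1)])
  show ?thesis using solution_nonneg[OF assms(2)] .
qed

lemma eta_flow_lower_bound:
  assumes "0 \<le> t0" "0 < T" "0 < \<delta>"
    and lint: "\<And>i j a b. (\<lambda>r. L r $ i $ j) integrable_on {a..b}"
    and rooted: "\<And>t1. t0 \<le> t1 \<Longrightarrow> has_spanning_tree (graph_edges L t1 (t1 + T) \<delta>)"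
  shows "transfer_factor \<delta> T ^ (CARD('n) * CARD('n))
           \<le> eta (V (t0 + real (CARD('n) * CARD('n)) * T) t0)"
proof -
  define N where "N = CARD('n) * CARD('n)"
  define e where "e = t0 + real N * T"
  define G where "G j = graph_edges L (e - real (Suc j) * T) (e - real (Suc j) * T + T) \<delta>" for j
  have "\<exists>r. \<forall>v. (r, v) \<in> (G j)\<^sup>*" if "j < N" for j
  proof -
    have "real (Suc j) * T \<le> real N * T" using that \<open>0 < T\<close> by (intro mult_right_mono) auto
    then show ?thesis
      using rooted[of "e - real (Suc j) * T"] unfolding G_def e_def has_spanning_tree_def by simp
  qed
  then obtain \<rho> where \<rho>: "\<And>y. (\<rho>, y) \<in> relcomp_seq (\<lambda>j. G j \<union> Id) N"
    using relcomp_seq_common_root[of G] unfolding N_def by blast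
  interpret metzler_solution L \<sigma> M1 t0 "\<lambda>i t. V t t0 $ i $ \<rho>"
    by (rule column_solution) fact
  have "transfer_factor \<delta> T ^ N \<le> V e t0 $ y $ \<rho>" for y
    using path_lower_bound[OF _ \<open>0 < T\<close> \<open>0 < \<delta>\<close> lint \<rho>[unfolded G_def], of 1]
      flow_start[OF \<open>0 \<le> t0\<close>] unfolding e_def by simp
  moreover have "0 \<le> V e t0 $ i $ k" for i k
    using flow_nonneg assms(1,2) unfolding e_def by simp
  ultimately show ?thesis
    using eta_ge_column_lower_bound unfolding e_def N_def by blast
qed

end

theorem lemma9:
  fixes L :: "real \<Rightarrow> real^'n::finite^'n"
    and V :: "real \<Rightarrow> real \<Rightarrow> real^'n^'n"
    and \<sigma> M1 \<delta> T :: real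
  assumes meas: "\<And>i j. (\<lambda>t. L t $ i $ j) \<in> borel_measurable lborel"
    and offdiag: "\<And>t i j. i \<noteq> j \<Longrightarrow> L t $ i $ j \<ge> 0"
    and diag: "\<And>t i. L t $ i $ i = - (\<Sum>j\<in>UNIV - {i}. L t $ i $ j)"
    and M1_pos: "M1 > 0"
    and bounded: "\<And>t i j. \<bar>L t $ i $ j\<bar> \<le> M1"
    and sigma_pos: "\<sigma> > 0"
    and V_sol: "\<And>t0 t. 0 \<le> t0 \<Longrightarrow> t0 \<le> t \<Longrightarrow>
        ((\<lambda>s. \<sigma> *\<^sub>R (L s ** V s t0)) has_integral (V t t0 - mat 1)) {t0..t}"
    and delta_pos: "\<delta> > 0"
    and T_pos: "T > 0"
    and span: "\<And>t1. t1 \<ge> 0 \<Longrightarrow> has_spanning_tree (graph_edges L t1 (t1 + T) \<delta>)"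
  shows "\<exists>\<delta>1 > 0. \<exists>T1 > 0. \<forall>t0 \<ge> 0. eta (V (t0 + T1) t0) > \<delta>1"
proof -
  have diag_nonpos: "L t $ i $ i \<le> 0" for t i
    using diag[of t i] sum_nonneg[of "UNIV - {i}" "\<lambda>j. L t $ i $ j"] offdiag by auto
  interpret metzler_flow L \<sigma> M1 V
    by unfold_locales (use offdiag diag_nonpos bounded sigma_pos V_sol in auto)
  define N where "N = CARD('n) * CARD('n)"
  define \<gamma> where "\<gamma> = transfer_factor \<delta> T ^ N"
  have "0 < \<gamma>" unfolding \<gamma>_def using transfer_factor_pos delta_pos T_pos by simp
  have bound: "\<gamma> \<le> eta (V (t0 + real N * T) t0)" if "0 \<le> t0" for t0
    unfolding \<gamma>_def N_def
    using that T_pos delta_pos integrable_on_bounded_measurable[OF meas bounded] span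
    by (intro eta_flow_lower_bound) auto
  show ?thesis
  proof (intro exI conjI allI impI)
    show "0 < \<gamma> / 2" "0 < real N * T" using \<open>0 < \<gamma>\<close> T_pos unfolding N_def by simp_all
    show "\<gamma> / 2 < eta (V (t0 + real N * T) t0)" if "0 \<le> t0" for t0
      using bound[OF that] \<open>0 < \<gamma>\<close> by simp
  qed
qed

end
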